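(* Let $A\in\{0,1\}^{n\times n}$, let $\mathcal{F}$ be the set of all compatible pairs $(n_1,n_2)$ for which $A$ admits an $(n_1,n_2)$ factorization, and let $\mathcal{L}=\{n_1:(n_1,n_2)\in\mathcal{F}\}$. Let $\mathfrak{l}_0<\mathfrak{l}_1<\dots<\mathfrak{l}_q$ be a branch of $\mathcal{L}$, and set $p_k=\mathfrak{l}_k/\mathfrak{l}_{k-1}$ for $k=1,\dots,q$ and $r=n/\mathfrak{l}_q$. Then $A$ admits an $(\mathfrak{l}_0,p_1,\dots,p_q,r)$ factorization, and this factorization is prime, i.e. every factor matrix in it is prime.
   Context: Kronecker products of binary matrices use Boolean arithmetic ($1+1=1$). An $(n_1,\dots,n_m)$ factorization of $A$ is $A=A_1\otimes\cdots\otimes A_m$ with $A_i\in\{0,1\}^{n_i\times n_i}$, $\prod n_i=n$. A compatible pair for $n$ is $(n_1,n_2)$ with $n_1,n_2$ positive divisors of $n$ different from $1$ and $n$ and $n_1n_2=n$. A matrix $X\in\{0,1\}^{m\times m}$ is decomposable if $X=X_1\otimes\cdots\otimes X_\ell$ for some $\ell>1$ and $X_i\in\{0,1\}^{m_i\times m_i}$ with $m_i>1$; it is prime if it is not decomposable. For a finite set $\mathcal{X}\subset\mathbb{N}$, $\overline{\mathcal{X}}$ denotes the set of elements of $\mathcal{X}$ that are not multiples of another element of $\mathcal{X}$. A branch of $\mathcal{L}$ is a sequence $\mathfrak{l}_0,\mathfrak{l}_1,\dots,\mathfrak{l}_q$ ($q\ge0$) constructed as follows: $\mathfrak{l}_0\in\overline{\mathcal{L}}$;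 for $k\ge1$, letting $\mathcal{M}_k$ be the set of elements of $\mathcal{L}$ that are multiples of $\mathfrak{l}_{k-1}$ other than $\mathfrak{l}_{k-1}$ itself, $\mathfrak{l}_k\in\overline{\mathcal{M}_k}$; the sequence stops at $\mathfrak{l}_q$ when $\mathcal{L}$ contains no multiple of $\mathfrak{l}_q$ other than $\mathfrak{l}_q$. *)

theory Defs
  imports Main
begin

text \<open>A binary matrix of size m is represented by a function bmat = nat => nat => bool,
  with only the entries i, j < m being meaningful (True = 1, False = 0).\<close>
type_synonym bmat = "nat \<Rightarrow> nat \<Rightarrow> bool"

definition mat_eq :: "nat \<Rightarrow> bmat \<Rightarrow> bmat \<Rightarrow> bool" where
  "mat_eq m X Y \<longleftrightarrow> (\<forall>i<m. \<forall>j<m. X i j = Y i j)"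

text \<open>Kronecker product X (x) Y where Y has size k (Boolean arithmetic; each entry
  of a Kronecker product is a single product, i.e. a conjunction).\<close>
definition kron :: "nat \<Rightarrow> bmat \<Rightarrow> bmat \<Rightarrow> bmat" where
  "kron k X Y = (\<lambda>i j. X (i div k) (j div k) \<and> Y (i mod k) (j mod k))"

fun kron_list :: "nat list \<Rightarrow> bmat list \<Rightarrow> bmat" where
  "kron_list (k # ks) (X # Xs) = kron (prod_list ks) X (kron_list ks Xs)"
| "kron_list _ _ = (\<lambda>i j. True)"

definition has_factorization :: "nat \<Rightarrow> bmat \<Rightarrow> nat list \<Rightarrow> bool" where
  "has_factorization n A ns \<longleftrightarrow> prod_list ns = n \<and>
     (\<exists>Xs. length Xs = length ns \<and> mat_eq n A (kron_list ns Xs))"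

definition decomposable :: "nat \<Rightarrow> bmat \<Rightarrow> bool" where
  "decomposable m X \<longleftrightarrow> (\<exists>ms Xs. length ms > 1 \<and> length Xs = length ms \<and>
     (\<forall>k\<in>set ms. k > 1) \<and> prod_list ms = m \<and> mat_eq m X (kron_list ms Xs))"

definition prime_mat :: "nat \<Rightarrow> bmat \<Rightarrow> bool" where
  "prime_mat m X \<longleftrightarrow> \<not> decomposable m X"

definition compatible_pair :: "nat \<Rightarrow> nat \<times> nat \<Rightarrow> bool" where
  "compatible_pair n p \<longleftrightarrow> (case p of (n1, n2) \<Rightarrow>
     n1 > 0 \<and> n2 > 0 \<and> n1 dvd n \<and> n2 dvd n \<and> n1 \<noteq> 1 \<and> n1 \<noteq> n \<and>
     n2 \<noteq> 1 \<and> n2 \<noteq> n \<and> n1 * n2 = n)"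

definition fact_pairs :: "nat \<Rightarrow> bmat \<Rightarrow> (nat \<times> nat) set" where
  "fact_pairs n A = {(n1, n2). compatible_pair n (n1, n2) \<and> has_factorization n A [n1, n2]}"

definition fact_L :: "nat \<Rightarrow> bmat \<Rightarrow> nat set" where
  "fact_L n A = {n1. \<exists>n2. (n1, n2) \<in> fact_pairs n A}"

definition dvd_minimal :: "nat set \<Rightarrow> nat set" where
  "dvd_minimal X = {x \<in> X. \<not> (\<exists>y\<in>X. y \<noteq> x \<and> y dvd x)}"

text \<open>A branch l_0, ..., l_q of L, represented as the nonempty list [l_0, ..., l_q].\<close>
definition is_branch :: "nat set \<Rightarrow> nat list \<Rightarrow> bool" where
  "is_branch L ls \<longleftrightarrow> ls \<noteq> [] \<and> hd ls \<in> dvd_minimal L \<and>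
     (\<forall>k. 0 < k \<and> k < length ls \<longrightarrow>
        ls ! k \<in> dvd_minimal {x \<in> L. ls ! (k - 1) dvd x \<and> x \<noteq> ls ! (k - 1)}) \<and>
     \<not> (\<exists>x\<in>L. last ls dvd x \<and> x \<noteq> last ls)"

end

(* Let 1 = c_0 | c_1 | ... | c_m = n be a divisibility chain whose inner members lie in L.
   The right Kronecker factors of A of sizes n/c_k are nested: if a nonzero matrix equals both
   X (x) Z and X' (x) Z' and the size of Z' divides that of Z, then Z' is a right factor of Z.
   Peeling off left factors one at a time therefore factors A with sizes c_k/c_(k-1).
   Conversely, any factorization of A can be regrouped into two factors at any cut. If the k-th
   factor of size c_k/c_(k-1) split nontrivially as a * b, refining by this split and cutting
   after a would put c_(k-1) * a into L strictly between c_(k-1) and c_k in divisibility, which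
   the minimality conditions defining a branch exclude. *)

theory Submission
  imports Defs
begin

lemma mat_eq_trans: "mat_eq m X Y \<Longrightarrow> mat_eq m Y Z \<Longrightarrow> mat_eq m X Z"
  unfolding mat_eq_def by auto

lemma mat_eq_kron_left: "mat_eq m X X' \<Longrightarrow> mat_eq (m * k) (kron k X Y) (kron k X' Y)"
  unfolding mat_eq_def kron_def by (metis less_mult_imp_div_less)

lemma mat_eq_kron_right: "mat_eq k Y Y' \<Longrightarrow> mat_eq (m * k) (kron k X Y) (kron k X Y')"
  unfolding mat_eq_def kron_def by (metis mod_less_divisor mult_0_right not_gr_zero not_less_zero)

lemma kron_assoc: "kron c (kron b X Y) Z = kron (b * c) X (kron c Y Z)"
proof (intro ext)
  fix i j :: nat
  have div_div: "i div c div b = i div (b * c)" for i :: nat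
    by (metis div_mult2_eq mult.commute)
  have mod_div: "i mod (b * c) div c = i div c mod b" for i :: nat
    using mod_mult2_eq[of i c b] by (cases "c = 0") (simp_all add: mult.commute)
  have mod_mod: "i mod (b * c) mod c = i mod c" for i :: nat
    by (simp add: mod_mod_cancel)
  show "kron c (kron b X Y) Z i j = kron (b * c) X (kron c Y Z) i j"
    unfolding kron_def div_div mod_div mod_mod by simp
qed

lemma kron_one_right [simp]:
  "kron 1 X (\<lambda>i j. True) = X" "kron (Suc 0) X (\<lambda>i j. True) = X"
  unfolding kron_def by simp_all

lemma kron_list_pair: "kron_list [a, b] [X, Y] = kron b X Y"
  by simp

lemma kron_list_append:
  "xs \<noteq> [] \<Longrightarrow> length xs = length Xs \<Longrightarrow>
   kron_list (xs @ ys) (Xs @ Ys) = kron (prod_list ys) (kron_list xs Xs) (kron_list ys Ys)"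
proof (induction xs arbitrary: Xs)
  case Nil
  then show ?case by simp
next
  case (Cons x xs)
  then obtain X Xs' where Xs: "Xs = X # Xs'" "length xs = length Xs'"
    by (cases Xs) auto
  show ?case
  proof (cases "xs = []")
    case True
    then show ?thesis using Xs by simp
  next
    case False
    then show ?thesis using Xs Cons.IH[OF False Xs(2)] by (simp add: kron_assoc)
  qed
qed

lemma has_factorization_pair_iff:
  "has_factorization n A [a, b] \<longleftrightarrow> a * b = n \<and> (\<exists>X Y. mat_eq n A (kron b X Y))"
proof
  assume "has_factorization n A [a, b]"
  then obtain X Y where "a * b = n" "mat_eq n A (kron_list [a, b] [X, Y])"
    unfolding has_factorization_def by (auto simp: length_Suc_conv)
  then show "a * b = n \<and> (\<exists>X Y. mat_eq n A (kron b X Y))"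
    by (simp only: kron_list_pair) blast
next
  assume "a * b = n \<and> (\<exists>X Y. mat_eq n A (kron b X Y))"
  then obtain X Y where "a * b = n" "mat_eq n A (kron_list [a, b] [X, Y])"
    by auto
  then show "has_factorization n A [a, b]"
    unfolding has_factorization_def by (intro conjI exI[of _ "[X, Y]"]) simp_all
qed

lemma prod_list_take_drop: "prod_list (take k xs) * prod_list (drop k xs) = prod_list xs"
  by (metis append_take_drop_id prod_list.append)

lemma has_factorization_grouping:
  assumes "has_factorization n A ns" "0 < k" "k < length ns"
  shows "has_factorization n A [prod_list (take k ns), prod_list (drop k ns)]"
proof -
  obtain Xs where Xs: "length Xs = length ns" "mat_eq n A (kron_list ns Xs)"
    and n: "prod_list ns = n"
    using assms(1) unfolding has_factorization_def by blast
  have "kron_list ns Xs = kron_list (take k ns @ drop k ns) (take k Xs @ drop k Xs)"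
    by simp
  also have "\<dots> = kron (prod_list (drop k ns)) (kron_list (take k ns) (take k Xs))
                        (kron_list (drop k ns) (drop k Xs))"
    using assms(2,3) Xs(1) by (intro kron_list_append) auto
  finally show ?thesis
    unfolding has_factorization_pair_iff using Xs(2) n prod_list_take_drop by metis
qed

text \<open>Fixing a nonzero entry \<open>(i0, j0)\<close> of \<open>Y\<close>, the matrix \<open>Z\<close> is the \<open>b \<times> b\<close> block of \<open>Y\<close>
  containing it, and in the second factorization that block is a \<open>d \<times> d\<close> block of \<open>X'\<close>
  Kronecker-multiplied by \<open>Z'\<close>.\<close>
lemma kron_right_factor_split:
  assumes Y: "mat_eq m Y (kron b X Z)" "mat_eq m Y (kron c X' Z')"
    and sizes: "b = d * c" "m = a * b"
    and nonzero: "i0 < m" "j0 < m" "Y i0 j0"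
  shows "\<exists>W. mat_eq b Z (kron c W Z')"
proof -
  define W where "W s t = X' ((i0 div b) * d + s) ((j0 div b) * d + t)" for s t
  have block_lt: "(x div b) * b + w < m" if "x < m" "w < b" for x w
  proof -
    have "x div b < a" using that sizes(2) by (simp add: div_less_iff_less_mult)
    then have "(x div b) * b + b \<le> a * b"
      by (metis add.commute mult.commute mult_Suc_right less_eq_Suc_le mult_le_mono2)
    then show ?thesis using that(2) sizes(2) by linarith
  qed
  have "Z u v = kron c W Z' u v" if u: "u < b" and v: "v < b" for u v
  proof -
    have "0 < c" using u sizes(1) by (cases c) auto
    define I where "I = (i0 div b) * b + u"
    define J where "J = (j0 div b) * b + v"
    have "I < m" "J < m" unfolding I_def J_def using block_lt u v nonzero by auto
    then have "Y I J = kron b X Z I J" "Y I J = kron c X' Z' I J"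
      using Y unfolding mat_eq_def by blast+
    moreover have "I div b = i0 div b" "I mod b = u" "J div b = j0 div b" "J mod b = v"
      unfolding I_def J_def using u v by simp_all
    moreover have "I = u + c * ((i0 div b) * d)" "J = v + c * ((j0 div b) * d)"
      unfolding I_def J_def sizes(1) by (simp_all add: algebra_simps)
    then have "I div c = (i0 div b) * d + u div c" "I mod c = u mod c"
      "J div c = (j0 div b) * d + v div c" "J mod c = v mod c"
      using \<open>0 < c\<close> by simp_all
    moreover have "X (i0 div b) (j0 div b)"
      using Y(1) nonzero unfolding mat_eq_def kron_def by auto
    ultimately show ?thesis
      unfolding kron_def W_def by simp
  qed
  then show ?thesis
    unfolding mat_eq_def by blast
qed

lemma has_factorization_zero:
  assumes "ns \<noteq> []" "prod_list ns = m" "\<forall>i<m. \<forall>j<m. \<not> Y i j"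
  shows "has_factorization m Y ns"
proof -
  obtain k ks where "ns = k # ks" using assms(1) by (cases ns) auto
  then have "kron_list ns (replicate (length ns) (\<lambda>i j. False)) = (\<lambda>i j. False)"
    by (simp add: kron_def)
  then show ?thesis
    unfolding has_factorization_def mat_eq_def using assms(2,3) by (metis length_replicate)
qed

lemma has_factorization_from_groupings:
  assumes "ns \<noteq> []" "prod_list ns = m"
    and "\<And>k. 0 < k \<Longrightarrow> k < length ns \<Longrightarrow>
           has_factorization m Y [prod_list (take k ns), prod_list (drop k ns)]"
  shows "has_factorization m Y ns"
  using assms
proof (induction ns arbitrary: m Y rule: list_nonempty_induct)
  case (single s)
  then show ?case
    unfolding has_factorization_def mat_eq_def by (intro conjI exI[of _ "[Y]"]) auto
next
  case (cons s ns)
  show ?case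
  proof (cases "\<exists>i0<m. \<exists>j0<m. Y i0 j0")
    case False
    then show ?thesis using has_factorization_zero cons.prems(1) by blast
  next
    case True
    then obtain i0 j0 where nonzero: "i0 < m" "j0 < m" "Y i0 j0" by blast
    define b where "b = prod_list ns"
    have m: "m = s * b" using cons.prems(1) unfolding b_def by simp
    obtain X Z where XZ: "mat_eq m Y (kron b X Z)"
      using cons.prems(2)[of 1] cons.hyps unfolding has_factorization_pair_iff b_def by auto
    have "has_factorization b Z [prod_list (take k ns), prod_list (drop k ns)]"
      if k: "0 < k" "k < length ns" for k
    proof -
      obtain X' Z' where "mat_eq m Y (kron (prod_list (drop k ns)) X' Z')"
        using cons.prems(2)[of "Suc k"] k unfolding has_factorization_pair_iff by auto
      moreover have "b = prod_list (take k ns) * prod_list (drop k ns)"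
        unfolding b_def by (rule prod_list_take_drop [symmetric])
      ultimately obtain W where "mat_eq b Z (kron (prod_list (drop k ns)) W Z')"
        using kron_right_factor_split[OF XZ _ _ m nonzero] by blast
      then show ?thesis
        unfolding has_factorization_pair_iff b_def using prod_list_take_drop by blast
    qed
    with cons.IH obtain Zs where Zs: "length Zs = length ns" "mat_eq b Z (kron_list ns Zs)"
      unfolding has_factorization_def b_def by blast
    have "mat_eq m Y (kron b X (kron_list ns Zs))"
      using mat_eq_trans[OF XZ] mat_eq_kron_right[OF Zs(2), of s] m by simp
    then show ?thesis
      unfolding has_factorization_def using cons.prems(1) Zs(1) b_def
      by (intro conjI exI[of _ "X # Zs"]) auto
  qed
qed

lemma kron_list_append_mat_eq:
  assumes "length pre = length Pre" "prod_list zs' = prod_list zs"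
    and "mat_eq (prod_list zs) (kron_list zs Zs) (kron_list zs' Zs')"
  shows "mat_eq (prod_list (pre @ zs)) (kron_list (pre @ zs) (Pre @ Zs)) (kron_list (pre @ zs') (Pre @ Zs'))"
  using assms(1)
proof (induction pre arbitrary: Pre)
  case Nil
  then show ?case using assms(3) by simp
next
  case (Cons p pre)
  then obtain P Pre' where "Pre = P # Pre'" "length pre = length Pre'"
    by (cases Pre) auto
  then show ?case
    using mat_eq_kron_right[OF Cons.IH[of Pre'], where m = p and X = P] assms(2) by simp
qed

lemma has_factorization_refine:
  assumes Xs: "length Xs = length ns" "mat_eq n A (kron_list ns Xs)" "prod_list ns = n"
    and i: "i < length ns"
    and factor: "has_factorization (ns ! i) (Xs ! i) ms" "ms \<noteq> []"
  shows "has_factorization n A (take i ns @ ms @ drop (Suc i) ns)"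
proof -
  obtain Ys where Ys: "length Ys = length ms" "mat_eq (ns ! i) (Xs ! i) (kron_list ms Ys)"
    and ms: "prod_list ms = ns ! i"
    using factor(1) unfolding has_factorization_def by blast
  define post where "post = drop (Suc i) ns"
  define Post where "Post = drop (Suc i) Xs"
  have "kron_list (ns ! i # post) (Xs ! i # Post) = kron (prod_list post) (Xs ! i) (kron_list post Post)"
    by simp
  moreover have "kron_list (ms @ post) (Ys @ Post) = kron (prod_list post) (kron_list ms Ys) (kron_list post Post)"
    using factor(2) Ys(1)[symmetric] by (rule kron_list_append)
  ultimately have "mat_eq (prod_list (ns ! i # post)) (kron_list (ns ! i # post) (Xs ! i # Post))
                     (kron_list (ms @ post) (Ys @ Post))"
    using mat_eq_kron_left[OF Ys(2)] by simp
  then have "mat_eq (prod_list (take i ns @ ns ! i # post))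
               (kron_list (take i ns @ ns ! i # post) (take i Xs @ Xs ! i # Post))
               (kron_list (take i ns @ ms @ post) (take i Xs @ Ys @ Post))"
    using i Xs(1) ms by (intro kron_list_append_mat_eq) simp_all
  moreover have "take i ns @ ns ! i # post = ns" "take i Xs @ Xs ! i # Post = Xs"
    unfolding post_def Post_def using i Xs(1) by (simp_all add: id_take_nth_drop[symmetric])
  ultimately have "mat_eq n A (kron_list (take i ns @ ms @ post) (take i Xs @ Ys @ Post))"
    using Xs(2,3) mat_eq_trans by metis
  moreover have "prod_list (take i ns @ ms @ post) = n"
    using Xs(3) ms i unfolding post_def by (metis id_take_nth_drop prod_list.Cons prod_list.append)
  ultimately show ?thesis
    unfolding has_factorization_def post_def Post_def using i Xs(1) Ys(1)
    by (intro conjI exI[of _ "take i Xs @ Ys @ Post"]) (auto simp: Post_def)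
qed

lemma one_less_prod_list: "xs \<noteq> [] \<Longrightarrow> \<forall>x\<in>set xs. 1 < x \<Longrightarrow> 1 < prod_list (xs :: nat list)"
proof (induction xs)
  case Nil
  then show ?case by simp
next
  case (Cons x xs)
  then show ?case by (cases "xs = []") (auto simp flip: One_nat_def intro: less_1_mult)
qed

lemma decomposable_pair_factorization:
  assumes "decomposable m X"
  shows "\<exists>a b. 1 < a \<and> 1 < b \<and> has_factorization m X [a, b]"
proof -
  obtain ms where ms: "1 < length ms" "\<forall>k\<in>set ms. 1 < k" "has_factorization m X ms"
    using assms unfolding decomposable_def has_factorization_def by blast
  then obtain a ms' where "ms = a # ms'" "ms' \<noteq> []"
    by (cases ms) auto
  with ms(2) have "1 < a" "1 < prod_list ms'"
    using one_less_prod_list[of ms'] by auto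
  then show ?thesis
    using has_factorization_grouping[OF ms(3), of 1] ms(1) \<open>ms = a # ms'\<close> by auto
qed

lemma fact_L_iff: "l \<in> fact_L n A \<longleftrightarrow> (\<exists>b. 1 < l \<and> 1 < b \<and> has_factorization n A [l, b])"
proof
  assume "l \<in> fact_L n A"
  then obtain b where "compatible_pair n (l, b)" "has_factorization n A [l, b]"
    unfolding fact_L_def fact_pairs_def by blast
  then show "\<exists>b. 1 < l \<and> 1 < b \<and> has_factorization n A [l, b]"
    unfolding compatible_pair_def by (intro exI[of _ b]) auto
next
  assume "\<exists>b. 1 < l \<and> 1 < b \<and> has_factorization n A [l, b]"
  then obtain b where b: "1 < l" "1 < b" "has_factorization n A [l, b]" by blast
  then have "l * b = n" unfolding has_factorization_pair_iff by blast
  with b(1,2) have "compatible_pair n (l, b)"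
    unfolding compatible_pair_def by auto
  with b(3) show "l \<in> fact_L n A"
    unfolding fact_L_def fact_pairs_def by blast
qed

lemma decomposable_factor_in_fact_L:
  assumes Xs: "length Xs = length ns" "mat_eq n A (kron_list ns Xs)" "prod_list ns = n"
    and i: "i < length ns" and "0 < n" and "decomposable (ns ! i) (Xs ! i)"
  obtains a b where "1 < a" "1 < b" "ns ! i = a * b" "prod_list (take i ns) * a \<in> fact_L n A"
proof -
  obtain a b where ab: "1 < a" "1 < b" "has_factorization (ns ! i) (Xs ! i) [a, b]"
    using decomposable_pair_factorization assms(6) by blast
  have "0 \<notin> set ns" using Xs(3) \<open>0 < n\<close> by (metis gr_implies_not0 prod_list_zero_iff)
  then have "0 < prod_list (take i ns)" "0 < prod_list (drop (Suc i) ns)"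
    by (metis gr0I in_set_dropD in_set_takeD prod_list_zero_iff)+
  then have "a \<le> prod_list (take i ns) * a" "b \<le> b * prod_list (drop (Suc i) ns)"
    by simp_all
  then have big: "1 < prod_list (take i ns) * a" "1 < b * prod_list (drop (Suc i) ns)"
    using ab(1,2) by linarith+
  have "has_factorization n A (take i ns @ [a, b] @ drop (Suc i) ns)"
    using has_factorization_refine[OF Xs i ab(3)] by simp
  from has_factorization_grouping[OF this, of "Suc i"]
  have "has_factorization n A [prod_list (take i ns) * a, b * prod_list (drop (Suc i) ns)]"
    using i by (simp add: min_def)
  with big have "prod_list (take i ns) * a \<in> fact_L n A"
    unfolding fact_L_iff by blast
  moreover have "ns ! i = a * b"
    using ab(3) unfolding has_factorization_pair_iff by simp
  ultimately show ?thesis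
    using that ab(1,2) by blast
qed

fun quotients :: "nat list \<Rightarrow> nat list" where
  "quotients (a # b # cs) = b div a # quotients (b # cs)"
| "quotients _ = []"

lemma length_quotients [simp]: "length (quotients cs) = length cs - 1"
  by (induction cs rule: quotients.induct) auto

lemma nth_quotients: "Suc i < length cs \<Longrightarrow> quotients cs ! i = cs ! Suc i div cs ! i"
  by (induction cs arbitrary: i rule: quotients.induct) (auto simp: nth_Cons split: nat.split)

lemma prod_list_take_quotients:
  "successively (dvd) cs \<Longrightarrow> j < length cs \<Longrightarrow> hd cs * prod_list (take j (quotients cs)) = cs ! j"
proof (induction cs arbitrary: j rule: quotients.induct)
  case (1 a b cs)
  show ?case
  proof (cases j)
    case (Suc j')
    then have "b * prod_list (take j' (quotients (b # cs))) = (b # cs) ! j'"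
      using 1 by simp
    moreover have "a * (b div a) = b" using "1.prems"(1) by simp
    ultimately show ?thesis using Suc by (simp add: mult.assoc [symmetric])
  qed simp
qed auto

lemma prod_list_drop_quotients:
  "successively (dvd) cs \<Longrightarrow> j < length cs \<Longrightarrow> cs ! j * prod_list (drop j (quotients cs)) = last cs"
proof (induction cs arbitrary: j rule: quotients.induct)
  case (1 a b cs)
  show ?case
  proof (cases j)
    case 0
    have "b * prod_list (quotients (b # cs)) = last (b # cs)"
      using "1.IH"[of 0] "1.prems"(1) by simp
    moreover have "a * (b div a) = b" using "1.prems"(1) by simp
    ultimately show ?thesis using 0 by (simp add: mult.assoc [symmetric])
  qed (use 1 in simp)
qed auto

definition covers_in :: "nat set \<Rightarrow> nat \<Rightarrow> nat \<Rightarrow> bool" where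
  "covers_in L a b \<longleftrightarrow> a dvd b \<and> (\<forall>x\<in>L. a dvd x \<longrightarrow> x dvd b \<longrightarrow> x = a \<or> x = b)"

lemma successively_covers_in_dvd: "successively (covers_in L) cs \<Longrightarrow> successively (dvd) cs"
  by (erule successively_mono) (simp add: covers_in_def)

lemma fact_L_proper_divisor:
  assumes "l \<in> fact_L n A"
  shows "1 < l" "l < n" "l dvd n"
proof -
  obtain b where "1 < l" "1 < b" "l * b = n"
    using assms unfolding fact_L_iff has_factorization_pair_iff by blast
  then show "1 < l" "l < n" "l dvd n" by auto
qed

lemma branch_covers_chain:
  assumes "is_branch L ls" and L: "\<And>x. x \<in> L \<Longrightarrow> x dvd n"
  shows "set ls \<subseteq> L" "successively (covers_in L) (1 # ls @ [n])"
proof -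
  have ne: "ls \<noteq> []" and first: "hd ls \<in> dvd_minimal L"
    and step: "\<And>k. 0 < k \<Longrightarrow> k < length ls \<Longrightarrow>
        ls ! k \<in> dvd_minimal {x \<in> L. ls ! (k - 1) dvd x \<and> x \<noteq> ls ! (k - 1)}"
    and final: "\<not> (\<exists>x\<in>L. last ls dvd x \<and> x \<noteq> last ls)"
    using assms(1) unfolding is_branch_def by auto
  have "ls ! k \<in> L" if "k < length ls" for k
    using that first step[of k] ne by (cases k) (auto simp: dvd_minimal_def hd_conv_nth)
  then show "set ls \<subseteq> L" by (auto simp: in_set_conv_nth)
  have "covers_in L 1 (hd ls)"
    using first unfolding covers_in_def dvd_minimal_def by auto
  moreover have "successively (covers_in L) ls"
    unfolding successively_conv_nth
  proof (intro allI impI)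
    fix i assume "Suc i < length ls"
    then show "covers_in L (ls ! i) (ls ! Suc i)"
      using step[of "Suc i"] unfolding covers_in_def dvd_minimal_def by auto
  qed
  moreover have "last ls \<in> L" using \<open>set ls \<subseteq> L\<close> ne by auto
  then have "covers_in L (last ls) n"
    using final L unfolding covers_in_def by auto
  ultimately show "successively (covers_in L) (1 # ls @ [n])"
    using ne by (simp add: successively_Cons successively_append_iff)
qed

lemma quotients_Cons_snoc:
  assumes "xs \<noteq> []"
  shows "quotients (a # xs @ [b]) =
    hd xs div a # map (\<lambda>k. xs ! k div xs ! (k - 1)) [1..<length xs] @ [b div last xs]"
proof (rule nth_equalityI)
  show "length (quotients (a # xs @ [b])) =
    length (hd xs div a # map (\<lambda>k. xs ! k div xs ! (k - 1)) [1..<length xs] @ [b div last xs])"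
    using assms by simp
next
  fix j assume "j < length (quotients (a # xs @ [b]))"
  then have j: "j \<le> length xs" by simp
  show "quotients (a # xs @ [b]) ! j =
    (hd xs div a # map (\<lambda>k. xs ! k div xs ! (k - 1)) [1..<length xs] @ [b div last xs]) ! j"
  proof (cases j)
    case 0
    then show ?thesis using assms by (simp add: nth_quotients nth_append hd_conv_nth)
  next
    case (Suc j')
    with j consider "Suc j' < length xs" | "j' = length xs - 1" by linarith
    then show ?thesis
      using assms Suc by cases (auto simp: nth_quotients nth_append last_conv_nth)
  qed
qed

lemma has_factorization_quotients:
  assumes "successively (dvd) cs" "hd cs = 1" "last cs = n" "2 \<le> length cs"
    and inner: "\<And>j. 0 < j \<Longrightarrow> Suc j < length cs \<Longrightarrow> cs ! j \<in> fact_L n A"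
  shows "has_factorization n A (quotients cs)"
proof (rule has_factorization_from_groupings)
  show "quotients cs \<noteq> []" using assms(4) by (auto simp flip: length_0_conv)
  have "cs \<noteq> []" using assms(4) by auto
  then have "cs ! 0 = 1" using assms(2) by (simp add: hd_conv_nth)
  then show "prod_list (quotients cs) = n"
    using prod_list_drop_quotients[OF assms(1), of 0] assms(3) \<open>cs \<noteq> []\<close> by simp
next
  fix k assume k: "0 < k" "k < length (quotients cs)"
  have take: "prod_list (take k (quotients cs)) = cs ! k"
    using prod_list_take_quotients[OF assms(1), of k] assms(2) k by simp
  have drop: "cs ! k * prod_list (drop k (quotients cs)) = n"
    using prod_list_drop_quotients[OF assms(1), of k] assms(3) k by simp
  have "Suc k < length cs" using k by simp
  then obtain b where b: "1 < cs ! k" "has_factorization n A [cs ! k, b]"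
    using inner[OF k(1)] unfolding fact_L_iff by blast
  then have "b = prod_list (drop k (quotients cs))"
    using drop unfolding has_factorization_pair_iff by auto
  with b take show "has_factorization n A [prod_list (take k (quotients cs)), prod_list (drop k (quotients cs))]"
    by simp
qed

lemma prime_mat_quotients:
  assumes sat: "successively (covers_in (fact_L n A)) cs" and cs: "hd cs = 1" "last cs = n" "0 < n"
    and Xs: "length Xs = length (quotients cs)" "mat_eq n A (kron_list (quotients cs) Xs)"
    and i: "i < length (quotients cs)"
  shows "prime_mat (quotients cs ! i) (Xs ! i)"
  unfolding prime_mat_def
proof
  define ns where "ns = quotients cs"
  have "successively (dvd) cs"
    using sat by (rule successively_covers_in_dvd)
  then have take: "prod_list (take j ns) = cs ! j"
    and drop: "cs ! j * prod_list (drop j ns) = n" if "j < length cs" for j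
    using prod_list_take_quotients[OF _ that] prod_list_drop_quotients[OF _ that] cs
    unfolding ns_def by simp_all
  have indices: "0 < length cs" "i < length cs" "Suc i < length cs" using i by auto
  have "cs ! 0 = 1"
    using take[OF indices(1)] by simp
  then have "prod_list ns = n"
    using drop[OF indices(1)] by simp
  have "0 < cs ! i"
    using drop[OF indices(2)] \<open>0 < n\<close> by (metis gr0I mult_0)
  assume "decomposable (quotients cs ! i) (Xs ! i)"
  moreover have "i < length ns" using i unfolding ns_def .
  ultimately obtain a b where ab: "1 < a" "1 < b" "ns ! i = a * b" "prod_list (take i ns) * a \<in> fact_L n A"
    using decomposable_factor_in_fact_L[OF Xs[folded ns_def] \<open>prod_list ns = n\<close> _ \<open>0 < n\<close>]
    unfolding ns_def by blast
  have in_L: "cs ! i * a \<in> fact_L n A"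
    using ab(4) unfolding take[OF indices(2)] .
  have next_eq: "cs ! Suc i = cs ! i * a * b"
    using take[OF indices(3)] take[OF indices(2)] ab(3) i
    by (simp add: take_Suc_conv_app_nth ns_def mult.assoc)
  have "covers_in (fact_L n A) (cs ! i) (cs ! Suc i)"
    using successively_nth[OF sat] indices(3) .
  then have "cs ! i * a = cs ! i \<or> cs ! i * a = cs ! Suc i"
    using in_L unfolding covers_in_def next_eq by (metis dvd_triv_left)
  moreover have "cs ! i < cs ! i * a" "cs ! i * a < cs ! Suc i"
    using ab(1,2) \<open>0 < cs ! i\<close> unfolding next_eq by simp_all
  ultimately show False by auto
qed

theorem corollary3:
  fixes n :: nat and A :: bmat and ls :: "nat list"
  assumes "is_branch (fact_L n A) ls"
  defines "ns \<equiv> hd ls # map (\<lambda>k. ls ! k div ls ! (k - 1)) [1..<length ls] @ [n div last ls]"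
  shows "has_factorization n A ns \<and>
    (\<exists>Xs. length Xs = length ns \<and> mat_eq n A (kron_list ns Xs) \<and>
          (\<forall>i<length ns. prime_mat (ns ! i) (Xs ! i)))"
proof -
  define cs where "cs = 1 # ls @ [n]"
  have ne: "ls \<noteq> []" using assms(1) unfolding is_branch_def by blast
  have "x dvd n" if "x \<in> fact_L n A" for x
    using fact_L_proper_divisor(3)[OF that] .
  note saturated = branch_covers_chain[OF assms(1) this]
  have "hd ls \<in> fact_L n A" using saturated(1) ne by auto
  then have "0 < n" using fact_L_proper_divisor(2) by fastforce
  have ns: "ns = quotients cs"
    unfolding ns_def cs_def using quotients_Cons_snoc[OF ne] by simp
  have chain: "successively (dvd) cs"
    using saturated(2) unfolding cs_def by (rule successively_covers_in_dvd)
  have "cs ! j \<in> fact_L n A" if "0 < j" "Suc j < length cs" for j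
    using that saturated(1) unfolding cs_def
    by (auto simp: nth_Cons nth_append split: nat.split)
  then have "has_factorization n A ns"
    unfolding ns using has_factorization_quotients[OF chain] ne by (simp add: cs_def)
  then obtain Xs where "length Xs = length ns" "mat_eq n A (kron_list ns Xs)"
    unfolding has_factorization_def by blast
  then show ?thesis
    using \<open>has_factorization n A ns\<close> prime_mat_quotients[OF saturated(2)[folded cs_def]] \<open>0 < n\<close>
    unfolding ns cs_def by auto
qed

end
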